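(* Let $F$ be a subfield of $\mathbb{R}$, $r\in F$, and $n$ a positive integer. There is a quantifier-free formula $\theta(x,u)$ in the language of $T_{\mathrm{comm}}[F]$, in disjunctive normal form with at most $n$ disjuncts, such that $$T_{\mathrm{mult}}[F]\cup\{0\le x,\;x\le r,\;u=x^2\}\vdash\theta\quad\text{and}\quad T_{\mathrm{add}}[F]\cup\{u<2x-1\}\cup\{\theta\}\vdash\bot,$$ if and only if $r\le n/(n+1)$.
   Context: For $a\in F$, $f_a$ is a unary function symbol interpreted as $f_a(x)=ax$; a constant $c\in F$ is denoted by $f_c(1)$, $x^2$ denotes $x\times x$ and $2x$ denotes $f_2(x)$. $T_{\mathrm{add}}[F]$ is the set of sentences true in $(\mathbb{R},0,1,+,-,<,(f_a)_{a\in F})$, $T_{\mathrm{mult}}[F]$ the set of sentences true in $(\mathbb{R},0,1,\times,\div,<,(f_a)_{a\in F})$ with $x\div0=0$, and $T_{\mathrm{comm}}[F]=T_{\mathrm{add}}[F]\cap T_{\mathrm{mult}}[F]$, the theory of $(\mathbb{R},0,1,<,(f_a)_{a\in F})$. Free variables $x,u$ are treated as constants in the derivations. *)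

theory Defs
  imports Complex_Main
begin

definition real_subfield :: "real set \<Rightarrow> bool" where
  "real_subfield F \<longleftrightarrow> 0 \<in> F \<and> 1 \<in> F \<and>
     (\<forall>a\<in>F. \<forall>b\<in>F. a + b \<in> F \<and> a - b \<in> F \<and> a * b \<in> F) \<and>
     (\<forall>a\<in>F. a \<noteq> 0 \<longrightarrow> inverse a \<in> F)"

section \<open>Syntax: one big signature; sublanguages are carved out below\<close>

text \<open>Terms.  CX and CU are the two extra constants x, u.  Fa a t is f_a(t).\<close>
datatype tm = Var nat | CX | CU | Zero | One
  | Add tm tm | Sub tm tm | Mul tm tm | Dvd tm tm | Fa real tm

datatype fm = Bot | Eq tm tm | Less tm tm | Not fm | And fm fm | Or fm fm | Imp fm fm
  | All nat fm | Ex nat fm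

datatype lang = LComm | LAdd | LMult

fun tm_in :: "lang \<Rightarrow> real set \<Rightarrow> tm \<Rightarrow> bool" where
  "tm_in L F (Var v) = True"
| "tm_in L F CX = True"
| "tm_in L F CU = True"
| "tm_in L F Zero = True"
| "tm_in L F One = True"
| "tm_in L F (Add s t) = (L = LAdd \<and> tm_in L F s \<and> tm_in L F t)"
| "tm_in L F (Sub s t) = (L = LAdd \<and> tm_in L F s \<and> tm_in L F t)"
| "tm_in L F (Mul s t) = (L = LMult \<and> tm_in L F s \<and> tm_in L F t)"
| "tm_in L F (Dvd s t) = (L = LMult \<and> tm_in L F s \<and> tm_in L F t)"
| "tm_in L F (Fa a t) = (a \<in> F \<and> tm_in L F t)"

fun fm_in :: "lang \<Rightarrow> real set \<Rightarrow> fm \<Rightarrow> bool" where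
  "fm_in L F Bot = True"
| "fm_in L F (Eq s t) = (tm_in L F s \<and> tm_in L F t)"
| "fm_in L F (Less s t) = (tm_in L F s \<and> tm_in L F t)"
| "fm_in L F (Not p) = fm_in L F p"
| "fm_in L F (And p q) = (fm_in L F p \<and> fm_in L F q)"
| "fm_in L F (Or p q) = (fm_in L F p \<and> fm_in L F q)"
| "fm_in L F (Imp p q) = (fm_in L F p \<and> fm_in L F q)"
| "fm_in L F (All v p) = fm_in L F p"
| "fm_in L F (Ex v p) = fm_in L F p"

fun tm_vars :: "tm \<Rightarrow> nat set" where
  "tm_vars (Var v) = {v}"
| "tm_vars (Add s t) = tm_vars s \<union> tm_vars t"
| "tm_vars (Sub s t) = tm_vars s \<union> tm_vars t"
| "tm_vars (Mul s t) = tm_vars s \<union> tm_vars t"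
| "tm_vars (Dvd s t) = tm_vars s \<union> tm_vars t"
| "tm_vars (Fa a t) = tm_vars t"
| "tm_vars _ = {}"

fun tm_consts :: "tm \<Rightarrow> bool" where
  "tm_consts CX = True"
| "tm_consts CU = True"
| "tm_consts (Add s t) = (tm_consts s \<or> tm_consts t)"
| "tm_consts (Sub s t) = (tm_consts s \<or> tm_consts t)"
| "tm_consts (Mul s t) = (tm_consts s \<or> tm_consts t)"
| "tm_consts (Dvd s t) = (tm_consts s \<or> tm_consts t)"
| "tm_consts (Fa a t) = tm_consts t"
| "tm_consts _ = False"

fun fm_free :: "fm \<Rightarrow> nat set" where
  "fm_free Bot = {}"
| "fm_free (Eq s t) = tm_vars s \<union> tm_vars t"
| "fm_free (Less s t) = tm_vars s \<union> tm_vars t"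
| "fm_free (Not p) = fm_free p"
| "fm_free (And p q) = fm_free p \<union> fm_free q"
| "fm_free (Or p q) = fm_free p \<union> fm_free q"
| "fm_free (Imp p q) = fm_free p \<union> fm_free q"
| "fm_free (All v p) = fm_free p - {v}"
| "fm_free (Ex v p) = fm_free p - {v}"

fun fm_consts :: "fm \<Rightarrow> bool" where
  "fm_consts Bot = False"
| "fm_consts (Eq s t) = (tm_consts s \<or> tm_consts t)"
| "fm_consts (Less s t) = (tm_consts s \<or> tm_consts t)"
| "fm_consts (Not p) = fm_consts p"
| "fm_consts (And p q) = (fm_consts p \<or> fm_consts q)"
| "fm_consts (Or p q) = (fm_consts p \<or> fm_consts q)"
| "fm_consts (Imp p q) = (fm_consts p \<or> fm_consts q)"
| "fm_consts (All v p) = fm_consts p"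
| "fm_consts (Ex v p) = fm_consts p"

definition sentence :: "fm \<Rightarrow> bool" where
  "sentence p \<longleftrightarrow> fm_free p = {} \<and> \<not> fm_consts p"

record 'a struc =
  s_dom :: "'a set"
  s_zero :: 'a
  s_one :: 'a
  s_add :: "'a \<Rightarrow> 'a \<Rightarrow> 'a"
  s_sub :: "'a \<Rightarrow> 'a \<Rightarrow> 'a"
  s_mul :: "'a \<Rightarrow> 'a \<Rightarrow> 'a"
  s_div :: "'a \<Rightarrow> 'a \<Rightarrow> 'a"
  s_less :: "'a \<Rightarrow> 'a \<Rightarrow> bool"
  s_fa :: "real \<Rightarrow> 'a \<Rightarrow> 'a"
  s_x :: 'a
  s_u :: 'a

definition wf_struc :: "'a struc \<Rightarrow> bool" where
  "wf_struc M \<longleftrightarrow> s_dom M \<noteq> {} \<and> s_zero M \<in> s_dom M \<and> s_one M \<in> s_dom M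
     \<and> s_x M \<in> s_dom M \<and> s_u M \<in> s_dom M
     \<and> (\<forall>a\<in>s_dom M. \<forall>b\<in>s_dom M. s_add M a b \<in> s_dom M \<and> s_sub M a b \<in> s_dom M
            \<and> s_mul M a b \<in> s_dom M \<and> s_div M a b \<in> s_dom M)
     \<and> (\<forall>c. \<forall>a\<in>s_dom M. s_fa M c a \<in> s_dom M)"

fun eval :: "'a struc \<Rightarrow> (nat \<Rightarrow> 'a) \<Rightarrow> tm \<Rightarrow> 'a" where
  "eval M e (Var v) = e v"
| "eval M e CX = s_x M"
| "eval M e CU = s_u M"
| "eval M e Zero = s_zero M"
| "eval M e One = s_one M"
| "eval M e (Add s t) = s_add M (eval M e s) (eval M e t)"
| "eval M e (Sub s t) = s_sub M (eval M e s) (eval M e t)"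
| "eval M e (Mul s t) = s_mul M (eval M e s) (eval M e t)"
| "eval M e (Dvd s t) = s_div M (eval M e s) (eval M e t)"
| "eval M e (Fa a t) = s_fa M a (eval M e t)"

fun sat :: "'a struc \<Rightarrow> (nat \<Rightarrow> 'a) \<Rightarrow> fm \<Rightarrow> bool" where
  "sat M e Bot = False"
| "sat M e (Eq s t) = (eval M e s = eval M e t)"
| "sat M e (Less s t) = s_less M (eval M e s) (eval M e t)"
| "sat M e (Not p) = (\<not> sat M e p)"
| "sat M e (And p q) = (sat M e p \<and> sat M e q)"
| "sat M e (Or p q) = (sat M e p \<or> sat M e q)"
| "sat M e (Imp p q) = (sat M e p \<longrightarrow> sat M e q)"
| "sat M e (All v p) = (\<forall>a\<in>s_dom M. sat M (e(v := a)) p)"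
| "sat M e (Ex v p) = (\<exists>a\<in>s_dom M. sat M (e(v := a)) p)"

definition holds :: "'a struc \<Rightarrow> fm \<Rightarrow> bool" where
  "holds M p \<longleftrightarrow> (\<forall>e. (\<forall>v. e v \<in> s_dom M) \<longrightarrow> sat M e p)"

text \<open>Derivability T \<union> G \<turnstile> p, rendered via the completeness theorem as semantic
  consequence.  Models are taken with carrier a subset of a set of size continuum,
  which suffices by Loewenheim--Skolem since the language has size at most continuum.\<close>
definition entails :: "fm set \<Rightarrow> fm set \<Rightarrow> fm \<Rightarrow> bool" where
  "entails T G p \<longleftrightarrow> (\<forall>M :: real struc. wf_struc M \<longrightarrow>
     (\<forall>s\<in>T. holds M s) \<longrightarrow> (\<forall>g\<in>G. holds M g) \<longrightarrow> holds M p)"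

definition R_add :: "real struc" where
  "R_add = \<lparr>s_dom = UNIV, s_zero = 0, s_one = 1, s_add = (+), s_sub = (-),
     s_mul = (\<lambda>_ _. 0), s_div = (\<lambda>_ _. 0), s_less = (<), s_fa = (*), s_x = 0, s_u = 0\<rparr>"

definition R_mult :: "real struc" where
  "R_mult = \<lparr>s_dom = UNIV, s_zero = 0, s_one = 1, s_add = (\<lambda>_ _. 0), s_sub = (\<lambda>_ _. 0),
     s_mul = (*), s_div = (/), s_less = (<), s_fa = (*), s_x = 0, s_u = 0\<rparr>"
  \<comment> \<open>Isabelle's real division already satisfies x / 0 = 0\<close>

definition T_add :: "real set \<Rightarrow> fm set" where
  "T_add F = {p. sentence p \<and> fm_in LAdd F p \<and> holds R_add p}"

definition T_mult :: "real set \<Rightarrow> fm set" where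
  "T_mult F = {p. sentence p \<and> fm_in LMult F p \<and> holds R_mult p}"

fun literal :: "fm \<Rightarrow> bool" where
  "literal (Eq s t) = True"
| "literal (Less s t) = True"
| "literal (Not (Eq s t)) = True"
| "literal (Not (Less s t)) = True"
| "literal _ = False"

definition conj_list :: "fm list \<Rightarrow> fm" where
  "conj_list ls = foldr And ls (Not Bot)"

definition dnf :: "fm list list \<Rightarrow> fm" where
  "dnf ds = foldr Or (map conj_list ds) Bot"

definition Le :: "tm \<Rightarrow> tm \<Rightarrow> fm" where
  "Le s t = Or (Less s t) (Eq s t)"

definition cst :: "real \<Rightarrow> tm" where
  "cst c = Fa c One"

end

theory Submission imports Defs begin

text \<open>T_add[F] and T_mult[F] are complete theories of real structures, and a ground term of the common language is
  a x, a u or a constant, so a literal of \<theta> says that an affine function A x + B u + C with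
  A = 0, B = 0 or C = 0 is = 0, < 0, \<noteq> 0 or \<ge> 0.  Hence \<theta> works iff every point (x, x^2) with
  0 \<le> x \<le> r satisfies some disjunct, while no point strictly below the tangent u = 2 x - 1 does.

  If r > n/(n+1) there are n + 1 points 0 < x_0 < ... < x_n \<le> r with x_k x_l < 2 x_l - 1 for
  k < l.  Two of them, p < q, satisfy a common disjunct; for \<rho> \<in> (p, q) the point (q, \<rho> q)
  is, for each such affine function, a nonnegative combination of (p, p^2) and (q, q^2), so it
  satisfies the disjunct as well except for finitely many \<rho> (the \<noteq>-literals).  For \<rho> close
  to p it lies below the tangent, a contradiction.

  If r \<le> n/(n+1), the n disjuncts u \<ge> (j/(j+1)) x \<and> x \<le> (j+1)/(j+2), j < n, work.\<close>

lemma real_subfield_of_nat: "real_subfield F \<Longrightarrow> real k \<in> F"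
  by (induction k) (auto simp: real_subfield_def)

lemma real_subfield_divide: "real_subfield F \<Longrightarrow> a \<in> F \<Longrightarrow> b \<in> F \<Longrightarrow> a / b \<in> F"
  unfolding real_subfield_def by (cases "b = 0") (auto simp: divide_inverse)

lemma sat_conj_list: "sat M e (conj_list c) \<longleftrightarrow> (\<forall>l\<in>set c. sat M e l)"
  by (induction c) (auto simp: conj_list_def)

lemma sat_dnf: "sat M e (dnf ds) \<longleftrightarrow> (\<exists>c\<in>set ds. \<forall>l\<in>set c. sat M e l)"
  by (induction ds) (auto simp: dnf_def sat_conj_list)

lemma fm_free_conj_list: "fm_free (conj_list c) = (\<Union>l\<in>set c. fm_free l)"
  by (induction c) (auto simp: conj_list_def)

lemma fm_free_dnf: "fm_free (dnf ds) = (\<Union>c\<in>set ds. \<Union>l\<in>set c. fm_free l)"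
  by (induction ds) (auto simp: dnf_def fm_free_conj_list)

lemma fm_in_conj_list: "fm_in L F (conj_list c) \<longleftrightarrow> (\<forall>l\<in>set c. fm_in L F l)"
  by (induction c) (auto simp: conj_list_def)

lemma fm_in_dnf: "fm_in L F (dnf ds) \<longleftrightarrow> (\<forall>c\<in>set ds. \<forall>l\<in>set c. fm_in L F l)"
  by (induction ds) (auto simp: dnf_def fm_in_conj_list)

fun qfree :: "fm \<Rightarrow> bool" where
  "qfree (All v p) = False"
| "qfree (Ex v p) = False"
| "qfree (Not p) = qfree p"
| "qfree (And p q) = (qfree p \<and> qfree q)"
| "qfree (Or p q) = (qfree p \<and> qfree q)"
| "qfree (Imp p q) = (qfree p \<and> qfree q)"
| "qfree _ = True"

lemma qfree_conj_list: "qfree (conj_list c) \<longleftrightarrow> (\<forall>l\<in>set c. qfree l)"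
  by (induction c) (auto simp: conj_list_def)

lemma qfree_dnf: "qfree (dnf ds) \<longleftrightarrow> (\<forall>c\<in>set ds. \<forall>l\<in>set c. qfree l)"
  by (induction ds) (auto simp: dnf_def qfree_conj_list)

lemma eval_ground_indep: "tm_vars t = {} \<Longrightarrow> eval M e t = eval M e' t"
  by (induction t) auto

lemma sat_ground_indep: "qfree p \<Longrightarrow> fm_free p = {} \<Longrightarrow> sat M e p = sat M e' p"
  by (induction p) (simp_all add: eval_ground_indep[of _ M e e'])

lemma eval_update_xu: "\<not> tm_consts t \<Longrightarrow> eval (M\<lparr>s_x := a, s_u := b\<rparr>) e t = eval M e t"
  by (induction t) auto

lemma sat_update_xu: "\<not> fm_consts p \<Longrightarrow> sat (M\<lparr>s_x := a, s_u := b\<rparr>) e p = sat M e p"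
  by (induction p arbitrary: e) (auto simp: eval_update_xu)

lemma holds_update_xu: "sentence p \<Longrightarrow> holds (M\<lparr>s_x := a, s_u := b\<rparr>) p = holds M p"
  unfolding holds_def sentence_def by (simp add: sat_update_xu)

fun tm_abstract_xu :: "tm \<Rightarrow> tm" where
  "tm_abstract_xu CX = Var 0"
| "tm_abstract_xu CU = Var 1"
| "tm_abstract_xu (Add s t) = Add (tm_abstract_xu s) (tm_abstract_xu t)"
| "tm_abstract_xu (Sub s t) = Sub (tm_abstract_xu s) (tm_abstract_xu t)"
| "tm_abstract_xu (Mul s t) = Mul (tm_abstract_xu s) (tm_abstract_xu t)"
| "tm_abstract_xu (Dvd s t) = Dvd (tm_abstract_xu s) (tm_abstract_xu t)"
| "tm_abstract_xu (Fa a t) = Fa a (tm_abstract_xu t)"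
| "tm_abstract_xu t = t"

fun fm_abstract_xu :: "fm \<Rightarrow> fm" where
  "fm_abstract_xu (Eq s t) = Eq (tm_abstract_xu s) (tm_abstract_xu t)"
| "fm_abstract_xu (Less s t) = Less (tm_abstract_xu s) (tm_abstract_xu t)"
| "fm_abstract_xu (Not p) = Not (fm_abstract_xu p)"
| "fm_abstract_xu (And p q) = And (fm_abstract_xu p) (fm_abstract_xu q)"
| "fm_abstract_xu (Or p q) = Or (fm_abstract_xu p) (fm_abstract_xu q)"
| "fm_abstract_xu (Imp p q) = Imp (fm_abstract_xu p) (fm_abstract_xu q)"
| "fm_abstract_xu (All v p) = All v (fm_abstract_xu p)"
| "fm_abstract_xu (Ex v p) = Ex v (fm_abstract_xu p)"
| "fm_abstract_xu Bot = Bot"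

lemma eval_tm_abstract_xu:
  "eval M e (tm_abstract_xu t) = eval (M\<lparr>s_x := e 0, s_u := e 1\<rparr>) e t"
  by (induction t) auto

lemma sat_fm_abstract_xu:
  "qfree p \<Longrightarrow> sat M e (fm_abstract_xu p) = sat (M\<lparr>s_x := e 0, s_u := e 1\<rparr>) e p"
  by (induction p) (auto simp: eval_tm_abstract_xu)

lemma tm_vars_abstract_xu: "tm_vars (tm_abstract_xu t) \<subseteq> tm_vars t \<union> {0, 1}"
  by (induction t) auto

lemma fm_free_abstract_xu: "fm_free (fm_abstract_xu p) \<subseteq> fm_free p \<union> {0, 1}"
  by (induction p) (use tm_vars_abstract_xu in fastforce)+

lemma fm_consts_abstract_xu: "\<not> fm_consts (fm_abstract_xu p)"
proof -
  have "\<not> tm_consts (tm_abstract_xu t)" for t by (induction t) auto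
  then show ?thesis by (induction p) auto
qed

lemma fm_in_abstract_xu: "fm_in L F (fm_abstract_xu p) = fm_in L F p"
proof -
  have "tm_in L F (tm_abstract_xu t) = tm_in L F t" for t by (induction t) auto
  then show ?thesis by (induction p) auto
qed

definition theory_of :: "lang \<Rightarrow> real set \<Rightarrow> real struc \<Rightarrow> fm set" where
  "theory_of L F R = {p. sentence p \<and> fm_in L F p \<and> holds R p}"

lemma T_add_eq: "T_add F = theory_of LAdd F R_add"
  by (simp add: T_add_def theory_of_def)

lemma T_mult_eq: "T_mult F = theory_of LMult F R_mult"
  by (simp add: T_mult_def theory_of_def)

lemma s_dom_R_add [simp]: "s_dom R_add = UNIV"
  by (simp add: R_add_def)

lemma s_dom_R_mult [simp]: "s_dom R_mult = UNIV"
  by (simp add: R_mult_def)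

lemma entails_at_point:
  assumes "entails (theory_of L F R) G p" "s_dom R = UNIV"
    and "\<forall>g\<in>G. holds (R\<lparr>s_x := a, s_u := b\<rparr>) g"
  shows "holds (R\<lparr>s_x := a, s_u := b\<rparr>) p"
proof -
  have "wf_struc (R\<lparr>s_x := a, s_u := b\<rparr>)"
    using assms(2) by (simp add: wf_struc_def)
  moreover have "\<forall>s\<in>theory_of L F R. holds (R\<lparr>s_x := a, s_u := b\<rparr>) s"
    by (simp add: theory_of_def holds_update_xu)
  ultimately show ?thesis
    using assms(1,3) unfolding entails_def by blast
qed

text \<open>The universal closure over x, u of the implication is a sentence true in R, so it belongs
  to the complete theory of R.\<close>

lemma entails_by_universal_closure:
  assumes "s_dom R = UNIV"
    and ground: "\<forall>\<psi>\<in>set (p # gs). qfree \<psi> \<and> fm_free \<psi> = {} \<and> fm_in L F \<psi>"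
    and valid: "\<And>a b e. \<forall>g\<in>set gs. sat (R\<lparr>s_x := a, s_u := b\<rparr>) e g
                  \<Longrightarrow> sat (R\<lparr>s_x := a, s_u := b\<rparr>) e p"
  shows "entails (theory_of L F R) (set gs) p"
proof -
  define q where "q = Imp (conj_list gs) p"
  have q: "qfree q" "fm_free q = {}" "fm_in L F q"
    using ground by (auto simp: q_def qfree_conj_list fm_free_conj_list fm_in_conj_list)
  define \<sigma> where "\<sigma> = All 0 (All 1 (fm_abstract_xu q))"
  have "\<sigma> \<in> theory_of L F R"
  proof -
    have "sentence \<sigma>"
      using fm_free_abstract_xu[of q] q(2) fm_consts_abstract_xu[of q]
      by (auto simp: sentence_def \<sigma>_def)
    moreover have "holds R \<sigma>"
    proof -
      have "sat (R\<lparr>s_x := a, s_u := b\<rparr>) e q" for a b e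
        using valid by (simp add: q_def sat_conj_list)
      then show ?thesis
        using assms(1) by (simp add: holds_def \<sigma>_def sat_fm_abstract_xu[OF q(1)])
    qed
    ultimately show ?thesis
      using q(3) by (simp add: theory_of_def \<sigma>_def fm_in_abstract_xu)
  qed
  show ?thesis
    unfolding entails_def
  proof (intro allI impI)
    fix M :: "real struc"
    assume wf: "wf_struc M" and T: "\<forall>s\<in>theory_of L F R. holds M s"
      and G: "\<forall>g\<in>set gs. holds M g"
    show "holds M p"
      unfolding holds_def
    proof (intro allI impI)
      fix e :: "nat \<Rightarrow> real"
      assume e: "\<forall>v. e v \<in> s_dom M"
      let ?e = "e(0 := s_x M, 1 := s_u M)"
      have "sat M e \<sigma>"
        using T \<open>\<sigma> \<in> theory_of L F R\<close> e unfolding holds_def by blast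
      then have "sat M ?e (fm_abstract_xu q)"
        using wf by (simp add: \<sigma>_def wf_struc_def)
      then have "sat M ?e q"
        by (simp add: sat_fm_abstract_xu[OF q(1)])
      then show "sat M e p"
        using sat_ground_indep[OF q(1,2), of M ?e e] G e
        by (simp add: q_def sat_conj_list holds_def)
    qed
  qed
qed

section \<open>Ground literals of the common language\<close>

text \<open>The coefficients describe the value of a term as an affine function of (x, u) only for
  ground terms of the common language; on other terms they are junk.\<close>

fun coeff_x :: "tm \<Rightarrow> real" where
  "coeff_x CX = 1" | "coeff_x (Fa a t) = a * coeff_x t" | "coeff_x _ = 0"

fun coeff_u :: "tm \<Rightarrow> real" where
  "coeff_u CU = 1" | "coeff_u (Fa a t) = a * coeff_u t" | "coeff_u _ = 0"

fun coeff_1 :: "tm \<Rightarrow> real" where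
  "coeff_1 One = 1" | "coeff_1 (Fa a t) = a * coeff_1 t" | "coeff_1 _ = 0"

definition affine_value :: "tm \<Rightarrow> real \<Rightarrow> real \<Rightarrow> real" where
  "affine_value t a b = coeff_x t * a + coeff_u t * b + coeff_1 t"

fun lit_holds :: "fm \<Rightarrow> real \<Rightarrow> real \<Rightarrow> bool" where
  "lit_holds (Eq s t) a b \<longleftrightarrow> affine_value s a b = affine_value t a b"
| "lit_holds (Less s t) a b \<longleftrightarrow> affine_value s a b < affine_value t a b"
| "lit_holds (Not (Eq s t)) a b \<longleftrightarrow> affine_value s a b \<noteq> affine_value t a b"
| "lit_holds (Not (Less s t)) a b \<longleftrightarrow> \<not> affine_value s a b < affine_value t a b"
| "lit_holds _ a b \<longleftrightarrow> False"

definition ground_comm_literal :: "real set \<Rightarrow> fm \<Rightarrow> bool" where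
  "ground_comm_literal F l \<longleftrightarrow> literal l \<and> fm_in LComm F l \<and> fm_free l = {}"

lemma ground_comm_literal_cases:
  assumes "ground_comm_literal F l"
  obtains s t where "l = Eq s t \<or> l = Less s t \<or> l = Not (Eq s t) \<or> l = Not (Less s t)"
    and "tm_in LComm F s" "tm_vars s = {}" "tm_in LComm F t" "tm_vars t = {}"
  using assms unfolding ground_comm_literal_def
  by (cases l rule: literal.cases) auto

lemma tm_in_comm_imp: "tm_in LComm F t \<Longrightarrow> tm_in L F t"
  by (induction t) auto

lemma ground_comm_dnf:
  assumes "\<forall>c\<in>set ds. \<forall>l\<in>set c. ground_comm_literal F l"
  shows "qfree (dnf ds)" "fm_free (dnf ds) = {}" "fm_in L F (dnf ds)"
proof -
  have "qfree l \<and> fm_in L F l" if "ground_comm_literal F l" for l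
    using that by (rule ground_comm_literal_cases) (auto intro: tm_in_comm_imp)
  then show "qfree (dnf ds)" "fm_free (dnf ds) = {}" "fm_in L F (dnf ds)"
    using assms by (auto simp: qfree_dnf fm_free_dnf fm_in_dnf ground_comm_literal_def)
qed

lemma eval_ground_comm_tm:
  assumes "tm_in LComm F t" "tm_vars t = {}" "s_zero M = 0" "s_one M = 1" "s_fa M = (*)"
  shows "eval M e t = affine_value t (s_x M) (s_u M)"
  using assms by (induction t) (auto simp: affine_value_def algebra_simps)

lemma ground_comm_tm_single_coeff:
  "tm_in LComm F t \<Longrightarrow> tm_vars t = {} \<Longrightarrow>
   (coeff_u t = 0 \<and> coeff_1 t = 0) \<or> (coeff_x t = 0 \<and> coeff_1 t = 0) \<or> (coeff_x t = 0 \<and> coeff_u t = 0)"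
  by (induction t) auto

lemma sat_ground_comm_literal:
  assumes "ground_comm_literal F l" "s_zero M = 0" "s_one M = 1" "s_fa M = (*)" "s_less M = (<)"
  shows "sat M e l \<longleftrightarrow> lit_holds l (s_x M) (s_u M)"
  using assms(1)
proof (rule ground_comm_literal_cases)
  fix s t
  assume "l = Eq s t \<or> l = Less s t \<or> l = Not (Eq s t) \<or> l = Not (Less s t)"
    and "tm_in LComm F s" "tm_vars s = {}" "tm_in LComm F t" "tm_vars t = {}"
  with assms(2-5) show ?thesis
    by (auto simp: eval_ground_comm_tm)
qed

lemma sat_ground_comm_dnf:
  assumes "\<forall>c\<in>set ds. \<forall>l\<in>set c. ground_comm_literal F l"
    and "s_zero M = 0" "s_one M = 1" "s_fa M = (*)" "s_less M = (<)"
  shows "sat M e (dnf ds) \<longleftrightarrow> (\<exists>c\<in>set ds. \<forall>l\<in>set c. lit_holds l (s_x M) (s_u M))"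
proof -
  have "sat M e l \<longleftrightarrow> lit_holds l (s_x M) (s_u M)" if "c \<in> set ds" "l \<in> set c" for c l
    by (rule sat_ground_comm_literal[of F]) (use assms that in auto)
  then show ?thesis
    by (auto simp: sat_dnf)
qed

section \<open>Disjuncts through two points of the parabola\<close>

text \<open>The point (q, \<rho> q) lies in the cone spanned by (p, p^2) and (q, q^2) (case C = 0),
  on the vertical line through (q, q^2) (case B = 0), and at a height between
  p^2 and q^2 (case A = 0).\<close>

lemma affine_two_term_cone:
  fixes A B C p q \<rho> :: real
  assumes "A = 0 \<or> B = 0 \<or> C = 0" "0 < p" "p < \<rho>" "\<rho> < q"
  obtains \<alpha> \<beta> where "\<alpha> \<ge> 0" "\<beta> \<ge> 0" "\<alpha> + \<beta> > 0"
    "A*q + B*(\<rho>*q) + C = \<alpha>*(A*p + B*(p*p) + C) + \<beta>*(A*q + B*(q*q) + C)"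
proof -
  consider "C = 0" | "B = 0" | "A = 0"
    using assms(1) by blast
  then show ?thesis
  proof cases
    case 1
    let ?\<alpha> = "q*(q-\<rho>)/(p*(q-p))" and ?\<beta> = "(\<rho>-p)/(q-p)"
    have "p \<noteq> 0" "q - p \<noteq> 0"
      using assms by auto
    then have "A*q + B*(\<rho>*q) + C = ?\<alpha>*(A*p + B*(p*p) + C) + ?\<beta>*(A*q + B*(q*q) + C)"
      using 1 by (simp add: divide_simps) (simp add: algebra_simps)
    moreover have "?\<alpha> \<ge> 0" "?\<beta> > 0"
      using assms by auto
    ultimately show ?thesis
      by (intro that[of ?\<alpha> ?\<beta>]) auto
  next
    case 2
    show ?thesis
      by (rule that[of 0 1]) (simp_all add: 2)
  next
    case 3
    have "p*p < \<rho>*q" "\<rho>*q < q*q"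
      using assms by (simp_all add: mult_strict_mono)
    let ?\<alpha> = "(q*q-\<rho>*q)/(q*q-p*p)" and ?\<beta> = "(\<rho>*q-p*p)/(q*q-p*p)"
    have "?\<alpha> \<ge> 0" "?\<beta> > 0"
      using \<open>p*p < \<rho>*q\<close> \<open>\<rho>*q < q*q\<close> by auto
    moreover have "A*q + B*(\<rho>*q) + C = ?\<alpha>*(A*p + B*(p*p) + C) + ?\<beta>*(A*q + B*(q*q) + C)"
      using 3 \<open>p*p < \<rho>*q\<close> \<open>\<rho>*q < q*q\<close> by (simp add: divide_simps) (simp add: algebra_simps)
    ultimately show ?thesis
      by (intro that[of ?\<alpha> ?\<beta>]) auto
  qed
qed

lemma nonneg_combination_neg:
  fixes \<alpha> \<beta> P Q :: real
  assumes "\<alpha> \<ge> 0" "\<beta> \<ge> 0" "\<alpha> + \<beta> > 0" "P < 0" "Q < 0"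
  shows "\<alpha>*P + \<beta>*Q < 0"
proof (cases "\<alpha> > 0")
  case True
  then have "\<alpha>*P < 0" "\<beta>*Q \<le> 0"
    using assms by (simp_all add: mult_pos_neg mult_nonneg_nonpos)
  then show ?thesis by simp
next
  case False
  then have "\<alpha>*P \<le> 0" "\<beta>*Q < 0"
    using assms by (simp_all add: mult_pos_neg mult_nonneg_nonpos)
  then show ?thesis by simp
qed

lemma finite_affine_zeros:
  fixes \<beta> \<gamma> :: real
  assumes "\<beta> \<noteq> 0 \<or> \<gamma> \<noteq> 0"
  shows "finite {\<rho>. \<beta>*\<rho> + \<gamma> = 0}"
proof (cases "\<beta> = 0")
  case False
  then have "{\<rho>. \<beta>*\<rho> + \<gamma> = 0} = {- \<gamma> / \<beta>}"
    by (auto simp: field_simps)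
  then show ?thesis by simp
qed (use assms in simp)

lemma lit_holds_on_vertical_cofinite:
  assumes "ground_comm_literal F l" "0 < p" "p < q"
    and "lit_holds l p (p*p)" "lit_holds l q (q*q)"
  shows "finite {\<rho>\<in>{p<..<q}. \<not> lit_holds l q (\<rho>*q)}"
  using assms(1)
proof (rule ground_comm_literal_cases)
  fix s t
  assume l: "l = Eq s t \<or> l = Less s t \<or> l = Not (Eq s t) \<or> l = Not (Less s t)"
    and st: "tm_in LComm F s" "tm_vars s = {}" "tm_in LComm F t" "tm_vars t = {}"
  define A B C where "A = coeff_x s - coeff_x t" and "B = coeff_u s - coeff_u t"
    and "C = coeff_1 s - coeff_1 t"
  have ABC: "A = 0 \<or> B = 0 \<or> C = 0"
    using ground_comm_tm_single_coeff[OF st(1,2)] ground_comm_tm_single_coeff[OF st(3,4)]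
    by (auto simp: A_def B_def C_def)
  have diff: "affine_value s a b - affine_value t a b = A*a + B*b + C" for a b
    by (simp add: affine_value_def A_def B_def C_def algebra_simps)
  have holds_iff:
    "lit_holds (Eq s t) a b \<longleftrightarrow> A*a + B*b + C = 0"
    "lit_holds (Less s t) a b \<longleftrightarrow> A*a + B*b + C < 0"
    "lit_holds (Not (Eq s t)) a b \<longleftrightarrow> A*a + B*b + C \<noteq> 0"
    "lit_holds (Not (Less s t)) a b \<longleftrightarrow> A*a + B*b + C \<ge> 0" for a b
    using diff[of a b] by auto
  show ?thesis
  proof (cases "l = Not (Eq s t)")
    case True
    have "A*q + B*(q*q) + C \<noteq> 0"
      using assms(5) True holds_iff(3) by simp
    then have "finite {\<rho>. (B*q)*\<rho> + (A*q + C) = 0}"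
      by (intro finite_affine_zeros) auto
    moreover have "{\<rho>\<in>{p<..<q}. \<not> lit_holds l q (\<rho>*q)} \<subseteq> {\<rho>. (B*q)*\<rho> + (A*q + C) = 0}"
      using True holds_iff(3) by (auto simp: algebra_simps)
    ultimately show ?thesis
      by (rule finite_subset[rotated])
  next
    case False
    have "lit_holds l q (\<rho>*q)" if \<rho>: "p < \<rho>" "\<rho> < q" for \<rho>
    proof -
      obtain \<alpha> \<beta> where "\<alpha> \<ge> 0" "\<beta> \<ge> 0" "\<alpha> + \<beta> > 0"
        and comb: "A*q + B*(\<rho>*q) + C = \<alpha>*(A*p + B*(p*p) + C) + \<beta>*(A*q + B*(q*q) + C)"
        using affine_two_term_cone[OF ABC assms(2) \<rho>] .
      then show ?thesis
        using l False assms(4,5) nonneg_combination_neg[of \<alpha> \<beta>]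
        by (auto simp del: lit_holds.simps simp: holds_iff comb)
    qed
    then have "{\<rho>\<in>{p<..<q}. \<not> lit_holds l q (\<rho>*q)} = {}"
      by auto
    then show ?thesis
      by (metis finite.emptyI)
  qed
qed

lemma disjunct_holds_below_tangent:
  assumes "\<forall>l\<in>set c. ground_comm_literal F l" "0 < p" "p < q" "p * q < 2*q - 1"
    and "\<forall>l\<in>set c. lit_holds l p (p*p)" "\<forall>l\<in>set c. lit_holds l q (q*q)"
  obtains a b where "b < 2*a - 1" "\<forall>l\<in>set c. lit_holds l a b"
proof -
  define m where "m = min q ((2*q - 1) / q)"
  define bad where "bad = (\<Union>l\<in>set c. {\<rho>\<in>{p<..<q}. \<not> lit_holds l q (\<rho>*q)})"
  have "p < m"
    using assms(2-4) by (simp add: m_def pos_less_divide_eq)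
  moreover have "finite bad"
    unfolding bad_def
  proof (intro finite_UN_I finite_set)
    fix l
    assume "l \<in> set c"
    then show "finite {\<rho>\<in>{p<..<q}. \<not> lit_holds l q (\<rho>*q)}"
      using assms by (intro lit_holds_on_vertical_cofinite[of F]) auto
  qed
  ultimately have "infinite ({p<..<m} - bad)"
    using Diff_infinite_finite infinite_Ioo by blast
  then obtain \<rho> where \<rho>: "\<rho> \<in> {p<..<m}" "\<rho> \<notin> bad"
    using infinite_imp_nonempty by blast
  have "\<rho>*q < 2*q - 1"
    using \<rho>(1) assms(2,3) by (simp add: m_def pos_less_divide_eq)
  moreover have "\<forall>l\<in>set c. lit_holds l q (\<rho>*q)"
    using \<rho> by (auto simp: m_def bad_def)
  ultimately show ?thesis
    by (rule that)
qed

lemma reciprocal_gap_below_tangent: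
  fixes t T :: real
  assumes "1 < t" "t + 1 < T"
  shows "(1 - 1/t) * (1 - 1/T) < 2 * (1 - 1/T) - 1"
proof -
  have "0 < t" "0 < T"
    using assms by simp_all
  moreover have "T * (t + 1) < T * T"
    using assms by (intro mult_strict_left_mono) auto
  ultimately show ?thesis
    by (simp add: field_simps)
qed

lemma exists_spread_points:
  fixes n :: nat and r :: real
  assumes "real n / (real n + 1) < r"
  obtains x :: "nat \<Rightarrow> real"
  where "\<And>k. k \<le> n \<Longrightarrow> 0 < x k \<and> x k \<le> r"
    and "\<And>k l. k < l \<Longrightarrow> x k < x l \<and> x k * x l < 2 * x l - 1"
proof -
  obtain s where s: "1 < s" "(1 - r) * ((real n + 1) * s) \<le> 1"
  proof (cases "r < 1")
    case True
    have "(1 - r) * (real n + 1) < 1"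
      using assms by (simp add: field_simps)
    moreover have "0 < (1 - r) * (real n + 1)"
      using True by simp
    ultimately show ?thesis
      by (intro that[of "1 / ((1 - r) * (real n + 1))"]) (simp_all add: field_simps)
  next
    case False
    then have "(1 - r) * ((real n + 1) * 2) \<le> 0"
      by (intro mult_nonpos_nonneg) auto
    then show ?thesis
      by (intro that[of 2]) simp_all
  qed
  define T where "T k = (real k + 1) * s" for k :: nat
  have T_gt_1: "1 < T k" for k
    using s(1) less_le_trans[OF s(1), of "T k"] by (simp add: T_def)
  have T_gap: "T k + 1 < T l" if "k < l" for k l
  proof -
    have "s \<le> (real l - real k) * s"
      using that s(1) by simp
    then show ?thesis
      using s(1) by (simp add: T_def algebra_simps)
  qed
  show ?thesis
  proof (rule that[of "\<lambda>k. 1 - 1 / T k"])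
    fix k
    assume "k \<le> n"
    have "1 - r \<le> 1 / T k"
    proof (cases "r < 1")
      case True
      have "(1 - r) * T k \<le> (1 - r) * ((real n + 1) * s)"
        using \<open>k \<le> n\<close> True s(1) by (simp add: T_def)
      then show ?thesis
        using s(2) T_gt_1[of k] by (simp add: field_simps)
    next
      case False
      have "0 < 1 / T k"
        using T_gt_1[of k] by simp
      then show ?thesis
        using False by linarith
    qed
    then show "0 < 1 - 1 / T k \<and> 1 - 1 / T k \<le> r"
      using T_gt_1[of k] by simp
  next
    fix k l :: nat
    assume "k < l"
    have "1 / T l < 1 / T k"
      using T_gt_1[of k] T_gap[OF \<open>k < l\<close>] by (intro divide_strict_left_mono) auto
    then show "1 - 1 / T k < 1 - 1 / T l \<and> (1 - 1 / T k) * (1 - 1 / T l) < 2 * (1 - 1 / T l) - 1"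
      using reciprocal_gap_below_tangent[OF T_gt_1 T_gap[OF \<open>k < l\<close>]] by simp
  qed
qed

lemma pigeonhole_pair:
  assumes "finite S" "card S \<le> n" "\<And>k. k \<le> n \<Longrightarrow> \<exists>c\<in>S. P k c"
  obtains k l c where "k < l" "l \<le> n" "c \<in> S" "P k c" "P l c"
proof -
  obtain f where f: "\<And>k. k \<le> n \<Longrightarrow> f k \<in> S \<and> P k (f k)"
    using assms(3) by metis
  have "card (f ` {..n}) \<le> card S"
    using f assms(1) by (intro card_mono) auto
  then have "\<not> inj_on f {..n}"
    using assms(2) by (intro pigeonhole) simp
  then obtain k l where "k \<le> n" "l \<le> n" "k < l" "f k = f l"
    unfolding inj_on_def by (metis atMost_iff linorder_neq_iff)
  then show ?thesis
    using f that by metis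
qed

lemma separating_dnf_length_bound:
  assumes ground: "\<forall>c\<in>set ds. \<forall>l\<in>set c. ground_comm_literal F l"
    and "length ds \<le> n"
    and covers: "\<And>x. 0 \<le> x \<Longrightarrow> x \<le> r \<Longrightarrow> \<exists>c\<in>set ds. \<forall>l\<in>set c. lit_holds l x (x*x)"
    and avoids: "\<And>a b c. b < 2*a - 1 \<Longrightarrow> c \<in> set ds \<Longrightarrow> \<not> (\<forall>l\<in>set c. lit_holds l a b)"
  shows "r \<le> real n / (real n + 1)"
proof (rule ccontr)
  assume "\<not> r \<le> real n / (real n + 1)"
  then obtain x where x_range: "\<And>k. k \<le> n \<Longrightarrow> 0 < x k \<and> x k \<le> r"
    and x_spread: "\<And>k l. k < l \<Longrightarrow> x k < x l \<and> x k * x l < 2 * x l - 1"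
    using exists_spread_points by (metis not_le)
  have "card (set ds) \<le> n"
    using card_length \<open>length ds \<le> n\<close> le_trans by blast
  moreover have "\<exists>c\<in>set ds. \<forall>l'\<in>set c. lit_holds l' (x k) (x k * x k)" if "k \<le> n" for k
    using covers x_range[OF that] by simp
  ultimately obtain k l c where kl: "k < l" "l \<le> n" and c: "c \<in> set ds"
    and at_k: "\<forall>l'\<in>set c. lit_holds l' (x k) (x k * x k)"
    and at_l: "\<forall>l'\<in>set c. lit_holds l' (x l) (x l * x l)"
    by (rule pigeonhole_pair[OF finite_set])
  have "0 < x k" "x k < x l" "x k * x l < 2 * x l - 1"
    using x_range[of k] x_spread[OF kl(1)] kl by auto
  moreover have "\<forall>l'\<in>set c. ground_comm_literal F l'"
    using ground c by blast
  ultimately obtain a b where "b < 2*a - 1" "\<forall>l'\<in>set c. lit_holds l' a b"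
    using disjunct_holds_below_tangent at_k at_l by metis
  then show False
    using avoids c by blast
qed

lemma covers_parabola_of_entails_mult:
  assumes "entails (T_mult F) {Le Zero CX, Le CX (cst r), Eq CU (Mul CX CX)} (dnf ds)"
    and ground: "\<forall>c\<in>set ds. \<forall>l\<in>set c. ground_comm_literal F l"
    and "0 \<le> x" "x \<le> r"
  shows "\<exists>c\<in>set ds. \<forall>l\<in>set c. lit_holds l x (x*x)"
proof -
  let ?M = "R_mult\<lparr>s_x := x, s_u := x*x\<rparr>"
  have "holds ?M (dnf ds)"
    using assms(1,3,4) unfolding T_mult_eq
    by (intro entails_at_point) (auto simp: R_mult_def holds_def Le_def cst_def)
  then have "sat ?M (\<lambda>_. 0) (dnf ds)"
    by (simp add: holds_def R_mult_def)
  then show ?thesis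
    using sat_ground_comm_dnf[OF ground] by (simp add: R_mult_def)
qed

lemma avoids_below_tangent_of_entails_add:
  assumes "entails (T_add F) {Less CU (Sub (Fa 2 CX) One), dnf ds} Bot"
    and ground: "\<forall>c\<in>set ds. \<forall>l\<in>set c. ground_comm_literal F l"
    and "b < 2*a - 1" "c \<in> set ds"
  shows "\<not> (\<forall>l\<in>set c. lit_holds l a b)"
proof
  assume "\<forall>l\<in>set c. lit_holds l a b"
  let ?M = "R_add\<lparr>s_x := a, s_u := b\<rparr>"
  have "holds ?M (dnf ds)"
    using sat_ground_comm_dnf[OF ground] \<open>c \<in> set ds\<close> \<open>\<forall>l\<in>set c. lit_holds l a b\<close>
    by (auto simp: holds_def R_add_def)
  moreover have "holds ?M (Less CU (Sub (Fa 2 CX) One))"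
    using \<open>b < 2*a - 1\<close> by (simp add: holds_def R_add_def)
  ultimately have "holds ?M Bot"
    using assms(1) unfolding T_add_eq by (intro entails_at_point) auto
  then show False
    by (simp add: holds_def R_add_def)
qed

section \<open>The staircase formula\<close>

definition knot :: "nat \<Rightarrow> real" where
  "knot j = real j / (real j + 1)"

text \<open>The line u = knot j * x is the chord of the parabola u = x^2 from the origin to x = knot j,
  and it meets the tangent u = 2 x - 1 exactly at x = knot (j + 1); so disjunct j covers the arc
  over [knot j, knot (j + 1)] and lies on or above the tangent.\<close>

definition staircase_dnf :: "nat \<Rightarrow> fm list list" where
  "staircase_dnf n =
     map (\<lambda>j. [Not (Less CU (Fa (knot j) CX)), Not (Less (cst (knot (Suc j))) CX)]) [0..<n]"

lemma knot_in_subfield: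
  assumes "real_subfield F"
  shows "knot j \<in> F"
proof -
  have "real j / real (Suc j) \<in> F"
    using assms by (intro real_subfield_divide real_subfield_of_nat)
  then show ?thesis
    by (simp add: knot_def add.commute)
qed

lemma knot_cover:
  assumes "0 < n" "0 \<le> a" "a \<le> knot n"
  shows "\<exists>j<n. knot j \<le> a \<and> a \<le> knot (Suc j)"
  using assms
proof (induction n rule: nat_induct_non_zero)
  case 1
  then show ?case
    by (simp add: knot_def)
next
  case (Suc n)
  then show ?case
    by (cases "a \<le> knot n") (auto intro: less_SucI)
qed

lemma knot_chord_above_tangent:
  assumes "knot j * a \<le> b" "a \<le> knot (Suc j)"
  shows "2*a - 1 \<le> b"
proof -
  have "2 - knot j = (real j + 2) / (real j + 1)"
    by (simp add: knot_def field_simps)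
  moreover have "knot (Suc j) = (real j + 1) / (real j + 2)"
    by (simp add: knot_def add.commute)
  ultimately have "(2 - knot j) * knot (Suc j) = 1"
    by simp
  moreover have "(2 - knot j) * a \<le> (2 - knot j) * knot (Suc j)"
    using assms(2) by (intro mult_left_mono) (simp_all add: knot_def divide_le_eq)
  ultimately show ?thesis
    using assms(1) by (simp add: algebra_simps)
qed

lemma length_staircase_dnf: "length (staircase_dnf n) = n"
  by (simp add: staircase_dnf_def)

lemma staircase_dnf_ground:
  "real_subfield F \<Longrightarrow> \<forall>c\<in>set (staircase_dnf n). \<forall>l\<in>set c. ground_comm_literal F l"
  by (auto simp: staircase_dnf_def ground_comm_literal_def cst_def knot_in_subfield)

lemma staircase_dnf_holds_iff:
  "(\<exists>c\<in>set (staircase_dnf n). \<forall>l\<in>set c. lit_holds l a b)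
     \<longleftrightarrow> (\<exists>j<n. knot j * a \<le> b \<and> a \<le> knot (Suc j))"
  by (auto simp: staircase_dnf_def affine_value_def cst_def not_less)

lemma staircase_dnf_entails_mult:
  assumes F: "real_subfield F" and "r \<in> F" "0 < n" "r \<le> knot n"
  shows "entails (T_mult F) {Le Zero CX, Le CX (cst r), Eq CU (Mul CX CX)} (dnf (staircase_dnf n))"
proof -
  have "entails (theory_of LMult F R_mult)
          (set [Le Zero CX, Le CX (cst r), Eq CU (Mul CX CX)]) (dnf (staircase_dnf n))"
  proof (rule entails_by_universal_closure)
    fix a b :: real and e
    let ?M = "R_mult\<lparr>s_x := a, s_u := b\<rparr>"
    assume "\<forall>g\<in>set [Le Zero CX, Le CX (cst r), Eq CU (Mul CX CX)]. sat ?M e g"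
    then have "0 \<le> a" "a \<le> knot n" "b = a * a"
      using assms(4) by (auto simp: R_mult_def Le_def cst_def)
    then obtain j where "j < n" "knot j \<le> a" "a \<le> knot (Suc j)"
      using knot_cover[OF \<open>0 < n\<close>] by blast
    moreover have "knot j * a \<le> b"
      using \<open>knot j \<le> a\<close> \<open>0 \<le> a\<close> \<open>b = a * a\<close> by (simp add: mult_right_mono)
    ultimately show "sat ?M e (dnf (staircase_dnf n))"
      using sat_ground_comm_dnf[OF staircase_dnf_ground[OF F]] staircase_dnf_holds_iff
      by (auto simp: R_mult_def)
  qed (use ground_comm_dnf[OF staircase_dnf_ground[OF F]] \<open>r \<in> F\<close> in
        \<open>auto simp: Le_def cst_def\<close>)
  then show ?thesis
    by (simp add: T_mult_eq)
qed

lemma staircase_dnf_entails_add: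
  assumes F: "real_subfield F"
  shows "entails (T_add F) {Less CU (Sub (Fa 2 CX) One), dnf (staircase_dnf n)} Bot"
proof -
  have "entails (theory_of LAdd F R_add)
          (set [Less CU (Sub (Fa 2 CX) One), dnf (staircase_dnf n)]) Bot"
  proof (rule entails_by_universal_closure)
    fix a b :: real and e
    let ?M = "R_add\<lparr>s_x := a, s_u := b\<rparr>"
    assume "\<forall>g\<in>set [Less CU (Sub (Fa 2 CX) One), dnf (staircase_dnf n)]. sat ?M e g"
    then have "b < 2*a - 1" "\<exists>j<n. knot j * a \<le> b \<and> a \<le> knot (Suc j)"
      using sat_ground_comm_dnf[OF staircase_dnf_ground[OF F]] staircase_dnf_holds_iff
      by (auto simp: R_add_def)
    then show "sat ?M e Bot"
      using knot_chord_above_tangent by force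
  qed (use ground_comm_dnf[OF staircase_dnf_ground[OF F]] real_subfield_of_nat[OF F, of 2] in auto)
  then show ?thesis
    by (simp add: T_add_eq insert_commute)
qed

theorem theorem5p4:
  fixes F :: "real set" and r :: real and n :: nat
  assumes "real_subfield F" and "r \<in> F" and "n \<ge> 1"
  shows "(\<exists>ds :: fm list list.
            length ds \<le> n
          \<and> (\<forall>c\<in>set ds. \<forall>l\<in>set c. literal l \<and> fm_in LComm F l \<and> fm_free l = {})
          \<and> entails (T_mult F) {Le Zero CX, Le CX (cst r), Eq CU (Mul CX CX)} (dnf ds)
          \<and> entails (T_add F) {Less CU (Sub (Fa 2 CX) One), dnf ds} Bot)
         \<longleftrightarrow> r \<le> real n / (real n + 1)"
    (is "(\<exists>ds. ?separating ds) \<longleftrightarrow> _")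
proof
  assume "\<exists>ds. ?separating ds"
  then obtain ds where "length ds \<le> n"
    and ground: "\<forall>c\<in>set ds. \<forall>l\<in>set c. ground_comm_literal F l"
    and mult: "entails (T_mult F) {Le Zero CX, Le CX (cst r), Eq CU (Mul CX CX)} (dnf ds)"
    and add: "entails (T_add F) {Less CU (Sub (Fa 2 CX) One), dnf ds} Bot"
    unfolding ground_comm_literal_def by blast
  show "r \<le> real n / (real n + 1)"
    using ground \<open>length ds \<le> n\<close> covers_parabola_of_entails_mult[OF mult ground]
      avoids_below_tangent_of_entails_add[OF add ground]
    by (rule separating_dnf_length_bound)
next
  assume "r \<le> real n / (real n + 1)"
  then have "?separating (staircase_dnf n)"
    using staircase_dnf_ground[OF assms(1)] staircase_dnf_entails_add[OF assms(1)]
      staircase_dnf_entails_mult[OF assms(1,2)] \<open>n \<ge> 1\<close>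
    by (auto simp: length_staircase_dnf ground_comm_literal_def knot_def)
  then show "\<exists>ds. ?separating ds" ..
qed

end
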